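(* Let $\mathbf X=(X_1,\dots,X_M)$ have density $f\in\mathrm{MMEam}$ of the form $f(x_1,\dots,x_M)=\sum_{\mathbf i\in\mathscr S}p_{\mathbf i}f_{i_1}(x_1)\cdots f_{i_M}(x_M)$, let $\theta_1,\dots,\theta_M\in[0,1)$, write $v_k=\mathrm{V@R}_{\theta_k}(X_k)$, $\mathbf v=(v_1,\dots,v_M)$, and condition on the event $E=\{X_1>v_1,\dots,X_M>v_M\}$ (assumed to have positive probability). Then for $1\le j\le M$, $$\mathbb E[X_j\mid E]=v_j+\sum_{\mathbf i\in\mathscr S}p^{\mathrm{RL}}_{\mathbf v,\mathbf i}\,\alpha^{\mathrm{RL}}_{v_j,i_j}(-T_{i_j})^{-2}t_{i_j};$$ $$\mathbb E[X_j^2\mid E]=-v_j^2+2v_j\mathbb E[X_j\mid E]+2\sum_{\mathbf i\in\mathscr S}p^{\mathrm{RL}}_{\mathbf v,\mathbf i}\,\alpha^{\mathrm{RL}}_{v_j,i_j}(-T_{i_j})^{-3}t_{i_j};$$ and for $j_1\ne j_2$, $$\mathbb E[X_{j_1}X_{j_2}\mid E]=-v_{j_1}v_{j_2}+v_{j_1}\mathbb E[X_{j_2}\mid E]+v_{j_2}\mathbb E[X_{j_1}\mid E]+\sum_{\mathbf i\in\mathscr S}p^{\mathrm{RL}}_{\mathbf v,\mathbf i}\big(\alpha^{\mathrm{RL}}_{v_{j_1},i_{j_1}}(-T_{i_{j_1}})^{-2}t_{i_{j_1}}\big)\big(\alpha^{\mathrm{RL}}_{v_{j_2},i_{j_2}}(-T_{i_{j_2}})^{-2}t_{i_{j_2}}\big).$$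 Here $\alpha^{\mathrm{RL}}_{z,k}=\alpha_ke^{T_kz}/(\alpha_ke^{T_kz}l_k)$ and $p^{\mathrm{RL}}_{\mathbf z,\mathbf i}=p_{\mathbf i}\prod_{k=1}^M(\alpha_{i_k}e^{T_{i_k}z_k}l_{i_k})\big/\sum_{\mathbf h\in\mathscr S}p_{\mathbf h}\prod_{k=1}^M(\alpha_{h_k}e^{T_{h_k}z_k}l_{h_k})$. (These give the multivariate tail conditional expectation $\mathbb E[\mathbf X\mid E]$ and, via $\mathbb E[X_{j_1}X_{j_2}\mid E]-\mathbb E[X_{j_1}\mid E]\mathbb E[X_{j_2}\mid E]$, the entries of the multivariate tail covariance matrix.)
   Context: An ME density is a probability density on $[0,\infty)$ of the form $g(x)=\alpha e^{Tx}t$ ($\alpha$ real row vector, $T$ real square matrix, $t$ real column vector); triples are taken with all eigenvalues of $T$ having strictly negative real part, so $T$ is invertible; $l=(-T)^{-1}t$ and the survival function is $\alpha e^{Tx}l$. MMEam: fix $L,M\in\mathbb N_+$ and ME densities $f_1,\dots,f_L$ with triples $(\alpha_j,T_j,t_j)$, $l_j=(-T_j)^{-1}t_j$. Let $\mathscr S=\{1,\dots,L\}^M$, $\mathbf i=(i_1,\dots,i_M)$, and real numbers $p_{\mathbf i}$ (possibly negative) with $\sum p_{\mathbf i}=1$; $f(x)=\sum_{\mathbf i}p_{\mathbf i}f_{i_1}(x_1)\cdots f_{i_M}(x_M)$ on $[0,\infty)^M$ is an MMEam density if $f\ge0$. For a random variable $Y$ with distribution function $H_Y$, $\mathrm{V@R}_\theta(Y)=\inf\{y:H_Y(y)\ge\theta\}$.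 *)

theory Defs
  imports "HOL-Probability.Probability" "HOL-Library.FuncSet" "Jordan_Normal_Form.Char_Poly"
begin

definition mexp :: "real mat \<Rightarrow> real \<Rightarrow> real mat" where
  "mexp T x = mat (dim_row T) (dim_col T)
      (\<lambda>(i,j). \<Sum>k. (x ^ k / fact k) * ((T ^\<^sub>m k) $$ (i,j)))"

definition minv :: "real mat \<Rightarrow> real mat" where
  "minv A = (SOME B. inverts_mat A B \<and> inverts_mat B A)"

definition ME_triple :: "real vec \<Rightarrow> real mat \<Rightarrow> real vec \<Rightarrow> bool" where
  "ME_triple \<alpha> T t \<longleftrightarrow>
     T \<in> carrier_mat (dim_vec \<alpha>) (dim_vec \<alpha>) \<and> dim_vec t = dim_vec \<alpha> \<and>
     (\<forall>\<nu>::complex. eigenvalue (map_mat complex_of_real T) \<nu> \<longrightarrow> Re \<nu> < 0)"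

definition me_fun :: "real vec \<Rightarrow> real mat \<Rightarrow> real vec \<Rightarrow> real \<Rightarrow> real" where
  "me_fun \<alpha> T t x = \<alpha> \<bullet> (mexp T x *\<^sub>v t)"

definition ME_density :: "real vec \<Rightarrow> real mat \<Rightarrow> real vec \<Rightarrow> bool" where
  "ME_density \<alpha> T t \<longleftrightarrow> ME_triple \<alpha> T t \<and>
     (\<forall>x\<ge>0. me_fun \<alpha> T t x \<ge> 0) \<and>
     ((\<lambda>x. me_fun \<alpha> T t x) has_integral 1) {0..}"

definition me_l :: "real mat \<Rightarrow> real vec \<Rightarrow> real vec" where
  "me_l T t = minv (- T) *\<^sub>v t"

definition me_surv :: "real vec \<Rightarrow> real mat \<Rightarrow> real vec \<Rightarrow> real \<Rightarrow> real" where
  "me_surv \<alpha> T t x = \<alpha> \<bullet> (mexp T x *\<^sub>v me_l T t)"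

definition alphaRL :: "real vec \<Rightarrow> real mat \<Rightarrow> real vec \<Rightarrow> real \<Rightarrow> real vec" where
  "alphaRL \<alpha> T t z = (1 / me_surv \<alpha> T t z) \<cdot>\<^sub>v (transpose_mat (mexp T z) *\<^sub>v \<alpha>)"

definition idx_set :: "nat \<Rightarrow> nat \<Rightarrow> (nat \<Rightarrow> nat) set" where
  "idx_set L M = {..<M} \<rightarrow>\<^sub>E {..<L}"

definition mmeam_fun :: "nat \<Rightarrow> nat \<Rightarrow> ((nat \<Rightarrow> nat) \<Rightarrow> real) \<Rightarrow> (nat \<Rightarrow> real vec)
     \<Rightarrow> (nat \<Rightarrow> real mat) \<Rightarrow> (nat \<Rightarrow> real vec) \<Rightarrow> (nat \<Rightarrow> real) \<Rightarrow> real" where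
  "mmeam_fun L M p \<alpha> T t x =
     (if \<forall>k<M. 0 \<le> x k then
        (\<Sum>i\<in>idx_set L M. p i * (\<Prod>k<M. me_fun (\<alpha> (i k)) (T (i k)) (t (i k)) (x k)))
      else 0)"

definition pRL :: "nat \<Rightarrow> nat \<Rightarrow> ((nat \<Rightarrow> nat) \<Rightarrow> real) \<Rightarrow> (nat \<Rightarrow> real vec)
     \<Rightarrow> (nat \<Rightarrow> real mat) \<Rightarrow> (nat \<Rightarrow> real vec) \<Rightarrow> (nat \<Rightarrow> real) \<Rightarrow> (nat \<Rightarrow> nat) \<Rightarrow> real" where
  "pRL L M p \<alpha> T t z i =
     p i * (\<Prod>k<M. me_surv (\<alpha> (i k)) (T (i k)) (t (i k)) (z k)) /
     (\<Sum>h\<in>idx_set L M. p h * (\<Prod>k<M. me_surv (\<alpha> (h k)) (T (h k)) (t (h k)) (z k)))"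

definition dist_fun :: "'a measure \<Rightarrow> ('a \<Rightarrow> real) \<Rightarrow> real \<Rightarrow> real" where
  "dist_fun P Y y = measure P {\<omega> \<in> space P. Y \<omega> \<le> y}"

(* V@R_theta(Y) = inf {y : H_Y(y) >= theta} for a NONNEGATIVE random variable Y:
   the infimum is taken over y >= 0.  For theta > 0 this agrees with the plain
   infimum (H_Y(y) = 0 for y < 0); for theta = 0 it yields 0, the left end of the
   support, instead of -oo. *)
definition VaR :: "'a measure \<Rightarrow> ('a \<Rightarrow> real) \<Rightarrow> real \<Rightarrow> real" where
  "VaR P Y \<theta> = Inf {y. 0 \<le> y \<and> \<theta> \<le> dist_fun P Y y}"

definition cond_exp_event :: "'a measure \<Rightarrow> ('a \<Rightarrow> real) \<Rightarrow> 'a set \<Rightarrow> real" where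
  "cond_exp_event P Y A = (\<integral>\<omega>. indicator A \<omega> * Y \<omega> \<partial>P) / measure P A"

end

theory Submission
  imports Defs "Jordan_Normal_Form.Spectral_Radius" "HOL-Real_Asymp.Real_Asymp"
begin

text \<open>Write \<open>S(v) = \<alpha> exp(T v) l\<close> for the survival function of the ME density
  \<open>f(y) = \<alpha> exp(T y) t\<close>. Since \<open>\<alpha> exp(T y) (-T)^-1 w\<close> is an antiderivative of
  \<open>-\<alpha> exp(T y) w\<close> and \<open>exp(T y)\<close> decays exponentially, repeated integration by parts gives the
  tail moments \<open>\<integral>_v^\<infinity> y^m f(y) dy\<close> in closed form; divided by \<open>S(v)\<close> they are the moments of
  \<open>v\<close> plus the residual life, which is ME with representation \<open>alphaRL\<close>. The decay comes from
  the spectrum: for large \<open>s\<close> the matrix \<open>(T + (s + \<epsilon>) I) / s\<close> has spectral radius below 1, so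
  its powers are bounded and \<open>exp(T y) = exp(-(s + \<epsilon>) y) exp((T + (s + \<epsilon>) I) y)\<close> is
  \<open>O(exp(-\<epsilon> y))\<close>.

  For the mixture, Fubini turns \<open>E[1_E \<Prod>_k X_k^e_k]\<close> into
  \<open>\<Sum>_i p_i \<Prod>_k \<integral>_v_k^\<infinity> y^e_k f_i_k(y) dy\<close>, and dividing by
  \<open>P(E) = \<Sum>_i p_i \<Prod>_k S_i_k(v_k)\<close> produces the weights \<open>pRL\<close>.\<close>

section \<open>The matrix exponential as a power series\<close>

lemma mexp_carrier [simp]: "T \<in> carrier_mat n n \<Longrightarrow> mexp T x \<in> carrier_mat n n"
  unfolding mexp_def by auto

lemma mexp_index:
  "T \<in> carrier_mat n n \<Longrightarrow> i < n \<Longrightarrow> j < n \<Longrightarrow>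
    mexp T x $$ (i,j) = (\<Sum>k. x ^ k / fact k * (T ^\<^sub>m k) $$ (i,j))"
  unfolding mexp_def by auto

lemma index_mult_mat_square:
  fixes A B :: "'a :: comm_ring_1 mat"
  assumes "A \<in> carrier_mat n n" "B \<in> carrier_mat n n" "i < n" "j < n"
  shows "(A * B) $$ (i,j) = (\<Sum>l<n. A $$ (i,l) * B $$ (l,j))"
  using assms by (simp add: scalar_prod_def atLeast0LessThan)

lemma scalar_prod_mult_mat_vec:
  fixes A :: "'a :: comm_ring_1 mat"
  assumes "A \<in> carrier_mat n n" "dim_vec \<alpha> = n" "dim_vec w = n"
  shows "\<alpha> \<bullet> (A *\<^sub>v w) = (\<Sum>i<n. \<Sum>j<n. \<alpha> $ i * A $$ (i,j) * w $ j)"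
  using assms by (simp add: scalar_prod_def atLeast0LessThan sum_distrib_left mult.assoc)

lemma pow_mult_mat_vec_Suc:
  assumes "A \<in> carrier_mat n n" "u \<in> carrier_vec n"
  shows "(A ^\<^sub>m Suc k) *\<^sub>v u = (A ^\<^sub>m k) *\<^sub>v (A *\<^sub>v u)"
  using assoc_mult_mat_vec[OF pow_carrier_mat[OF assms(1)] assms] by simp

lemma pow_mat_entry_growth:
  fixes T :: "real mat"
  assumes T: "T \<in> carrier_mat n n"
  obtains c where "0 \<le> c" "\<And>k i j. i < n \<Longrightarrow> j < n \<Longrightarrow> \<bar>(T ^\<^sub>m k) $$ (i,j)\<bar> \<le> c ^ k"
proof -
  define b where "b = (\<Sum>i<n. \<Sum>j<n. \<bar>T $$ (i,j)\<bar>)"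
  have b: "\<bar>T $$ (i,j)\<bar> \<le> b" if "i < n" "j < n" for i j
  proof -
    have "\<bar>T $$ (i,j)\<bar> \<le> (\<Sum>j<n. \<bar>T $$ (i,j)\<bar>)"
      using that by (intro member_le_sum) auto
    also have "\<dots> \<le> b"
      unfolding b_def using that by (intro member_le_sum[where f = "\<lambda>i. \<Sum>j<n. \<bar>T $$ (i,j)\<bar>"]) (auto intro: sum_nonneg)
    finally show ?thesis .
  qed
  have b0: "0 \<le> b" unfolding b_def by (intro sum_nonneg) auto
  have "\<bar>(T ^\<^sub>m k) $$ (i,j)\<bar> \<le> (n * b) ^ k" if "i < n" "j < n" for k i j
    using that
  proof (induction k arbitrary: j)
    case (Suc k)
    have "\<bar>(T ^\<^sub>m Suc k) $$ (i,j)\<bar> = \<bar>\<Sum>l<n. (T ^\<^sub>m k) $$ (i,l) * T $$ (l,j)\<bar>"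
      using Suc.prems by (simp add: index_mult_mat_square[OF pow_carrier_mat[OF T] T])
    also have "\<dots> \<le> (\<Sum>l<n. (n * b) ^ k * b)"
      by (rule order_trans[OF sum_abs sum_mono])
        (use Suc b b0 in \<open>auto simp: abs_mult intro!: mult_mono\<close>)
    finally show ?case by (simp add: mult_ac)
  qed (use T in auto)
  then show thesis using that[of "n * b"] b0 by simp
qed

lemma summable_mexp_series:
  fixes T :: "real mat"
  assumes T: "T \<in> carrier_mat n n" and "i < n" "j < n"
  shows "summable (\<lambda>k. norm (x ^ k / fact k * (T ^\<^sub>m k) $$ (i,j)))"
proof -
  obtain c where "0 \<le> c" and c: "\<And>k. \<bar>(T ^\<^sub>m k) $$ (i,j)\<bar> \<le> c ^ k"
    using pow_mat_entry_growth[OF T] assms(2,3) by metis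
  have "summable (\<lambda>k. (\<bar>x\<bar> * c) ^ k / fact k)"
    using summable_exp_generic[of "\<bar>x\<bar> * c"] by (simp add: divide_inverse mult.commute)
  then show ?thesis
  proof (rule summable_comparison_test')
    fix k
    have "norm (norm (x ^ k / fact k * (T ^\<^sub>m k) $$ (i,j))) = \<bar>x\<bar> ^ k / fact k * \<bar>(T ^\<^sub>m k) $$ (i,j)\<bar>"
      by (simp add: abs_mult power_abs)
    also have "\<dots> \<le> \<bar>x\<bar> ^ k / fact k * c ^ k"
      by (intro mult_left_mono c) simp
    finally show "norm (norm (x ^ k / fact k * (T ^\<^sub>m k) $$ (i,j))) \<le> (\<bar>x\<bar> * c) ^ k / fact k"
      by (simp add: power_mult_distrib)
  qed
qed

lemma me_fun_sums:
  fixes T :: "real mat"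
  assumes T: "T \<in> carrier_mat n n" and \<alpha>: "dim_vec \<alpha> = n" and w: "dim_vec w = n"
  shows "(\<lambda>k. \<alpha> \<bullet> ((T ^\<^sub>m k) *\<^sub>v w) / fact k * x ^ k) sums me_fun \<alpha> T w x"
proof -
  have "(\<lambda>k. \<alpha> $ i * (x ^ k / fact k * (T ^\<^sub>m k) $$ (i,j)) * w $ j) sums (\<alpha> $ i * mexp T x $$ (i,j) * w $ j)"
    if "i < n" "j < n" for i j
    unfolding mexp_index[OF T that]
    by (intro sums_mult sums_mult2 summable_sums summable_norm_cancel[OF summable_mexp_series[OF T that]])
  then have "(\<lambda>k. \<Sum>i<n. \<Sum>j<n. \<alpha> $ i * (x ^ k / fact k * (T ^\<^sub>m k) $$ (i,j)) * w $ j) sums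
      (\<Sum>i<n. \<Sum>j<n. \<alpha> $ i * mexp T x $$ (i,j) * w $ j)"
    by (intro sums_sum) auto
  moreover have "(\<Sum>i<n. \<Sum>j<n. \<alpha> $ i * (x ^ k / fact k * (T ^\<^sub>m k) $$ (i,j)) * w $ j)
      = \<alpha> \<bullet> ((T ^\<^sub>m k) *\<^sub>v w) / fact k * x ^ k" for k
  proof -
    have "(\<Sum>i<n. \<Sum>j<n. \<alpha> $ i * (x ^ k / fact k * (T ^\<^sub>m k) $$ (i,j)) * w $ j)
        = x ^ k / fact k * (\<Sum>i<n. \<Sum>j<n. \<alpha> $ i * (T ^\<^sub>m k) $$ (i,j) * w $ j)"
      by (simp add: sum_distrib_left mult_ac)
    also have "\<dots> = \<alpha> \<bullet> ((T ^\<^sub>m k) *\<^sub>v w) / fact k * x ^ k"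
      by (simp add: scalar_prod_mult_mat_vec[OF pow_carrier_mat[OF T] \<alpha> w])
    finally show ?thesis .
  qed
  moreover have "me_fun \<alpha> T w x = (\<Sum>i<n. \<Sum>j<n. \<alpha> $ i * mexp T x $$ (i,j) * w $ j)"
    unfolding me_fun_def by (rule scalar_prod_mult_mat_vec[OF mexp_carrier[OF T] \<alpha> w])
  ultimately show ?thesis
    by (simp only:)
qed

lemma me_fun_has_real_derivative:
  fixes T :: "real mat"
  assumes T: "T \<in> carrier_mat n n" and \<alpha>: "dim_vec \<alpha> = n" and w: "dim_vec w = n"
  shows "(me_fun \<alpha> T w has_real_derivative me_fun \<alpha> T (T *\<^sub>v w) x) (at x)"
proof -
  define c where "c k = \<alpha> \<bullet> ((T ^\<^sub>m k) *\<^sub>v w) / fact k" for k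
  have me_fun_eq: "me_fun \<alpha> T w = (\<lambda>y. \<Sum>k. c k * y ^ k)"
    using me_fun_sums[OF assms] unfolding c_def by (auto simp: sums_iff)
  have "diffs c k = \<alpha> \<bullet> ((T ^\<^sub>m k) *\<^sub>v (T *\<^sub>v w)) / fact k" for k
  proof -
    note pow_mult_mat_vec_Suc[OF T carrier_vecI[OF w]]
    moreover have "real (Suc k) * (a / fact (Suc k)) = a / fact k" for a :: real
      by (simp add: divide_simps del: of_nat_Suc)
    ultimately show ?thesis
      unfolding diffs_def c_def by simp
  qed
  then have "(\<Sum>k. diffs c k * x ^ k) = me_fun \<alpha> T (T *\<^sub>v w) x"
    using me_fun_sums[OF T \<alpha>, of "T *\<^sub>v w" x] T w by (simp add: sums_iff)
  moreover have "summable (\<lambda>k. c k * y ^ k)" for y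
    using me_fun_sums[OF assms, of y] unfolding c_def by (rule sums_summable)
  ultimately show ?thesis
    unfolding me_fun_eq using termdiffs_strong_converges_everywhere by metis
qed

section \<open>Exponential decay for stable matrices\<close>

lemma sum_binomial_Suc:
  fixes X :: "nat \<Rightarrow> real"
  shows "(\<Sum>m\<le>k. real (k choose m) * r ^ m * X (Suc k - m)) + r * (\<Sum>m\<le>k. real (k choose m) * r ^ m * X (k - m))
     = (\<Sum>m\<le>Suc k. real (Suc k choose m) * r ^ m * X (Suc k - m))"
proof -
  define g where "g m = real (k choose m) * r ^ m * X (Suc k - m)" for m
  have A: "(\<Sum>m\<le>Suc k. g m) = g 0 + (\<Sum>m\<le>k. g (Suc m))"
    by (rule sum.atMost_Suc_shift)
  have B: "(\<Sum>m\<le>Suc k. g m) = (\<Sum>m\<le>k. g m)"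
    by (simp add: g_def)
  have C: "(\<Sum>m\<le>Suc k. real (Suc k choose m) * r ^ m * X (Suc k - m))
      = X (Suc k) + (\<Sum>m\<le>k. real (Suc k choose Suc m) * r ^ Suc m * X (k - m))"
    by (subst sum.atMost_Suc_shift) simp
  have D: "(\<Sum>m\<le>k. real (Suc k choose Suc m) * r ^ Suc m * X (k - m))
      = r * (\<Sum>m\<le>k. real (k choose m) * r ^ m * X (k - m)) + (\<Sum>m\<le>k. g (Suc m))"
    by (simp add: g_def sum.distrib sum_distrib_left algebra_simps)
  show ?thesis
    using A B C D by (simp add: g_def)
qed

lemma index_pow_add_smult_one_Suc:
  fixes N :: "real mat"
  assumes N: "N \<in> carrier_mat n n" and i: "i < n" and j: "j < n"
  shows "((N + r \<cdot>\<^sub>m 1\<^sub>m n) ^\<^sub>m Suc k) $$ (i,j)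
    = (\<Sum>l<n. ((N + r \<cdot>\<^sub>m 1\<^sub>m n) ^\<^sub>m k) $$ (i,l) * N $$ (l,j)) + r * ((N + r \<cdot>\<^sub>m 1\<^sub>m n) ^\<^sub>m k) $$ (i,j)"
proof -
  define A where "A = N + r \<cdot>\<^sub>m 1\<^sub>m n"
  have A: "A \<in> carrier_mat n n" unfolding A_def using N by simp
  have "(A ^\<^sub>m Suc k) $$ (i,j) = (\<Sum>l<n. (A ^\<^sub>m k) $$ (i,l) * A $$ (l,j))"
    using index_mult_mat_square[OF pow_carrier_mat[OF A] A i j] by simp
  also have "\<dots> = (\<Sum>l<n. (A ^\<^sub>m k) $$ (i,l) * N $$ (l,j) + (if l = j then r * (A ^\<^sub>m k) $$ (i,l) else 0))"
    using N j by (intro sum.cong) (auto simp: A_def algebra_simps)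
  also have "\<dots> = (\<Sum>l<n. (A ^\<^sub>m k) $$ (i,l) * N $$ (l,j)) + r * (A ^\<^sub>m k) $$ (i,j)"
    using j by (simp add: sum.distrib)
  finally show ?thesis
    unfolding A_def .
qed

lemma index_pow_add_smult_one:
  fixes N :: "real mat"
  assumes N: "N \<in> carrier_mat n n" and i: "i < n" and "j < n"
  shows "((N + r \<cdot>\<^sub>m 1\<^sub>m n) ^\<^sub>m k) $$ (i,j)
    = (\<Sum>m\<le>k. real (k choose m) * r ^ m * (N ^\<^sub>m (k - m)) $$ (i,j))"
  using assms(3)
proof (induction k arbitrary: j)
  case 0
  then show ?case using N i by simp
next
  case (Suc k)
  have "((N + r \<cdot>\<^sub>m 1\<^sub>m n) ^\<^sub>m Suc k) $$ (i,j)
      = (\<Sum>l<n. ((N + r \<cdot>\<^sub>m 1\<^sub>m n) ^\<^sub>m k) $$ (i,l) * N $$ (l,j)) + r * ((N + r \<cdot>\<^sub>m 1\<^sub>m n) ^\<^sub>m k) $$ (i,j)"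
    by (rule index_pow_add_smult_one_Suc[OF N i Suc.prems])
  also have "(\<Sum>l<n. ((N + r \<cdot>\<^sub>m 1\<^sub>m n) ^\<^sub>m k) $$ (i,l) * N $$ (l,j))
      = (\<Sum>m\<le>k. real (k choose m) * r ^ m * (\<Sum>l<n. (N ^\<^sub>m (k - m)) $$ (i,l) * N $$ (l,j)))"
    using Suc.IH by (simp add: sum_distrib_right sum_distrib_left mult_ac sum.swap[where A = "{..<n}"])
  also have "\<dots> = (\<Sum>m\<le>k. real (k choose m) * r ^ m * (N ^\<^sub>m (Suc k - m)) $$ (i,j))"
  proof (intro sum.cong refl)
    fix m assume "m \<in> {..k}"
    then have "Suc k - m = Suc (k - m)" by auto
    then show "real (k choose m) * r ^ m * (\<Sum>l<n. (N ^\<^sub>m (k - m)) $$ (i,l) * N $$ (l,j))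
        = real (k choose m) * r ^ m * (N ^\<^sub>m (Suc k - m)) $$ (i,j)"
      using index_mult_mat_square[OF pow_carrier_mat[OF N] N i Suc.prems] by simp
  qed
  finally show ?case
    using Suc.IH[OF Suc.prems] sum_binomial_Suc[of k r "\<lambda>m. (N ^\<^sub>m m) $$ (i,j)"] by simp
qed

lemma mexp_add_smult_one:
  fixes N :: "real mat"
  assumes N: "N \<in> carrier_mat n n" and i: "i < n" and j: "j < n"
  shows "mexp (N + r \<cdot>\<^sub>m 1\<^sub>m n) x $$ (i,j) = exp (r * x) * mexp N x $$ (i,j)"
proof -
  define a where "a m = (r * x) ^ m / fact m" for m
  define b where "b m = x ^ m / fact m * (N ^\<^sub>m m) $$ (i,j)" for m
  have "summable (\<lambda>m. norm (a m))"
    using summable_exp_generic[of "\<bar>r * x\<bar>"]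
    by (simp add: a_def abs_mult power_abs divide_inverse mult.commute)
  moreover have "summable (\<lambda>m. norm (b m))"
    unfolding b_def by (rule summable_mexp_series[OF N i j])
  ultimately have "(\<Sum>m. a m) * (\<Sum>m. b m) = (\<Sum>k. \<Sum>m\<le>k. a m * b (k - m))"
    by (rule Cauchy_product)
  moreover have "exp (r * x) = (\<Sum>m. a m)"
    using exp_converges[of "r * x"] by (simp add: a_def sums_iff divide_inverse mult.commute)
  ultimately have "exp (r * x) * mexp N x $$ (i,j) = (\<Sum>k. \<Sum>m\<le>k. a m * b (k - m))"
    by (simp add: mexp_index[OF N i j] b_def)
  also have "\<dots> = (\<Sum>k. x ^ k / fact k * ((N + r \<cdot>\<^sub>m 1\<^sub>m n) ^\<^sub>m k) $$ (i,j))"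
  proof (intro suminf_cong)
    fix k
    have "a m * b (k - m) = x ^ k / fact k * (real (k choose m) * r ^ m * (N ^\<^sub>m (k - m)) $$ (i,j))"
      if "m \<le> k" for m
      using that by (simp add: a_def b_def binomial_fact power_mult_distrib power_add[symmetric] field_simps)
    then show "(\<Sum>m\<le>k. a m * b (k - m)) = x ^ k / fact k * ((N + r \<cdot>\<^sub>m 1\<^sub>m n) ^\<^sub>m k) $$ (i,j)"
      by (simp add: index_pow_add_smult_one[OF N i j] sum_distrib_left)
  qed
  also have "\<dots> = mexp (N + r \<cdot>\<^sub>m 1\<^sub>m n) x $$ (i,j)"
    using mexp_index[of "N + r \<cdot>\<^sub>m 1\<^sub>m n" n i j x] N i j by simp
  finally show ?thesis ..
qed

lemma abs_mexp_le_of_pow_bound: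
  fixes N :: "real mat"
  assumes N: "N \<in> carrier_mat n n" and i: "i < n" and j: "j < n" and x: "0 \<le> x"
    and bound: "\<And>k. \<bar>(N ^\<^sub>m k) $$ (i,j)\<bar> \<le> c * s ^ k"
  shows "\<bar>mexp N x $$ (i,j)\<bar> \<le> c * exp (s * x)"
proof -
  have exp_sums: "(\<lambda>k. c * ((s * x) ^ k / fact k)) sums (c * exp (s * x))"
    using sums_mult[OF exp_converges[of "s * x"], of c] by (simp add: divide_inverse mult.commute)
  have "\<bar>mexp N x $$ (i,j)\<bar> \<le> (\<Sum>k. c * ((s * x) ^ k / fact k))"
    unfolding mexp_index[OF N i j] real_norm_def[symmetric]
  proof (rule norm_suminf_le)
    fix k
    have "norm (x ^ k / fact k * (N ^\<^sub>m k) $$ (i,j)) = x ^ k / fact k * \<bar>(N ^\<^sub>m k) $$ (i,j)\<bar>"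
      using x by (simp add: abs_mult)
    also have "\<dots> \<le> x ^ k / fact k * (c * s ^ k)"
      using x by (intro mult_left_mono bound) simp
    finally show "norm (x ^ k / fact k * (N ^\<^sub>m k) $$ (i,j)) \<le> c * ((s * x) ^ k / fact k)"
      by (simp add: power_mult_distrib mult_ac)
  qed (use exp_sums in \<open>rule sums_summable\<close>)
  then show ?thesis
    using exp_sums by (simp add: sums_iff)
qed

lemma pow_smult_mat:
  fixes A :: "'a :: comm_ring_1 mat"
  assumes A: "A \<in> carrier_mat n n"
  shows "(a \<cdot>\<^sub>m A) ^\<^sub>m k = a ^ k \<cdot>\<^sub>m A ^\<^sub>m k"
proof (induction k)
  case 0
  then show ?case using A by (intro eq_matI) auto
next
  case (Suc k)
  have "(a \<cdot>\<^sub>m A) ^\<^sub>m Suc k = a ^ k \<cdot>\<^sub>m (A ^\<^sub>m k * (a \<cdot>\<^sub>m A))"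
    using mult_smult_assoc_mat[OF pow_carrier_mat[OF A] smult_carrier_mat[OF A]] by (simp add: Suc.IH)
  also have "\<dots> = a ^ k \<cdot>\<^sub>m (a \<cdot>\<^sub>m (A ^\<^sub>m k * A))"
    by (simp add: mult_smult_distrib[OF pow_carrier_mat[OF A] A])
  also have "\<dots> = a ^ Suc k \<cdot>\<^sub>m A ^\<^sub>m Suc k"
    by (intro eq_matI) auto
  finally show ?case .
qed

lemma pow_smult_entry_bound:
  fixes B :: "real mat"
  assumes B: "B \<in> carrier_mat n n" and s: "0 \<le> s"
    and sr: "spectral_radius (map_mat complex_of_real B) < 1"
  obtains c where "\<And>k i j. i < n \<Longrightarrow> j < n \<Longrightarrow> \<bar>((s \<cdot>\<^sub>m B) ^\<^sub>m k) $$ (i,j)\<bar> \<le> c * s ^ k"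
proof -
  have "map_mat complex_of_real B \<in> carrier_mat n n"
    using B by simp
  then obtain c where c: "\<And>k. norm_bound (map_mat complex_of_real B ^\<^sub>m k) c"
    using spectral_radius_jnf_norm_bound_less_1_upper_triangular sr by blast
  have "\<bar>((s \<cdot>\<^sub>m B) ^\<^sub>m k) $$ (i,j)\<bar> \<le> c * s ^ k" if "i < n" "j < n" for k i j
  proof -
    have "map_mat complex_of_real B ^\<^sub>m k = map_mat complex_of_real (B ^\<^sub>m k)"
      by (rule of_real_hom.mat_hom_pow[OF B, symmetric])
    then have "\<bar>(B ^\<^sub>m k) $$ (i,j)\<bar> \<le> c"
      using c[of k] that B unfolding norm_bound_def by auto
    then have "s ^ k * \<bar>(B ^\<^sub>m k) $$ (i,j)\<bar> \<le> c * s ^ k"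
      using s by (metis mult.commute mult_left_mono zero_le_power)
    then show ?thesis
      using that B s by (simp add: pow_smult_mat abs_mult)
  qed
  then show thesis
    by (rule that)
qed

lemma stable_mat_margin:
  fixes T :: "real mat"
  assumes T: "T \<in> carrier_mat n n"
    and stable: "\<And>\<nu>::complex. eigenvalue (map_mat complex_of_real T) \<nu> \<Longrightarrow> Re \<nu> < 0"
  obtains \<epsilon> where "\<epsilon> > 0" "\<And>\<nu>. \<nu> \<in> spectrum (map_mat complex_of_real T) \<Longrightarrow> Re \<nu> + \<epsilon> < 0"
proof -
  define \<Lambda> where "\<Lambda> = spectrum (map_mat complex_of_real T)"
  have fin: "finite \<Lambda>"
    unfolding \<Lambda>_def using card_finite_spectrum[of "map_mat complex_of_real T" n] T by simp
  show thesis
  proof (cases "\<Lambda> = {}")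
    case True
    then show thesis using that[of 1] unfolding \<Lambda>_def by simp
  next
    case False
    define \<mu> where "\<mu> = Max (Re ` \<Lambda>)"
    have "\<mu> \<in> Re ` \<Lambda>" unfolding \<mu>_def using fin False by (intro Max_in) auto
    then have \<mu>: "\<mu> < 0" using stable unfolding \<Lambda>_def spectrum_def by auto
    have le: "Re \<nu> \<le> \<mu>" if "\<nu> \<in> \<Lambda>" for \<nu> unfolding \<mu>_def using fin that by (intro Max_ge) auto
    show thesis
    proof (rule that[of "- \<mu> / 2"])
      show "- \<mu> / 2 > 0" using \<mu> by simp
      show "Re \<nu> + - \<mu> / 2 < 0" if "\<nu> \<in> spectrum (map_mat complex_of_real T)" for \<nu>
        using le[of \<nu>] \<mu> that unfolding \<Lambda>_def by simp
    qed
  qed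
qed

lemma cmod_add_of_real_lt:
  fixes w :: complex
  assumes w: "Re w < 0" and s: "(cmod w)\<^sup>2 / (- 2 * Re w) < s"
  shows "cmod (w + of_real s) < s"
proof -
  have "0 \<le> (cmod w)\<^sup>2 / (- 2 * Re w)" using w by (intro divide_nonneg_pos) auto
  then have s0: "0 < s" using s by linarith
  have "(cmod w)\<^sup>2 < s * (- 2 * Re w)"
    using s by (subst (asm) pos_divide_less_eq) (use w in auto)
  then have "(cmod (w + of_real s))\<^sup>2 < s\<^sup>2"
    unfolding cmod_power2 by (simp add: power2_eq_square algebra_simps)
  then show ?thesis
    by (rule power_less_imp_less_base) (use s0 in simp)
qed

lemma eigenvalue_scaled_shift:
  fixes T :: "real mat"
  assumes T: "T \<in> carrier_mat n n" and s: "s \<noteq> 0"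
    and z: "eigenvalue (map_mat complex_of_real ((1 / s) \<cdot>\<^sub>m (T + c \<cdot>\<^sub>m 1\<^sub>m n))) z"
  shows "eigenvalue (map_mat complex_of_real T) (of_real s * z - of_real c)"
proof -
  define Tc where "Tc = map_mat complex_of_real T"
  define Bc where "Bc = map_mat complex_of_real ((1 / s) \<cdot>\<^sub>m (T + c \<cdot>\<^sub>m 1\<^sub>m n))"
  have Tc: "Tc \<in> carrier_mat n n" and Bc: "Bc \<in> carrier_mat n n"
    unfolding Tc_def Bc_def using T by auto
  have "char_matrix Bc z = of_real (1 / s) \<cdot>\<^sub>m char_matrix Tc (of_real s * z - of_real c)"
    using T s by (intro eq_matI) (auto simp: char_matrix_def Bc_def Tc_def field_simps)
  then show ?thesis
    using z s Tc Bc unfolding Tc_def[symmetric] Bc_def[symmetric] by (simp add: eigenvalue_det)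
qed

text \<open>For large \<open>s\<close> the eigenvalues of \<open>T + (s + \<epsilon>) I\<close> lie in the open disc of radius \<open>s\<close>
  around 0, because those of \<open>T + \<epsilon> I\<close> lie in the disc of radius \<open>s\<close> around \<open>-s\<close>.\<close>
lemma stable_mat_shift_pow_bound:
  fixes T :: "real mat"
  assumes T: "T \<in> carrier_mat n n"
    and stable: "\<And>\<nu>::complex. eigenvalue (map_mat complex_of_real T) \<nu> \<Longrightarrow> Re \<nu> < 0"
  obtains \<epsilon> s c where "\<epsilon> > 0" "s > 0"
    "\<And>k i j. i < n \<Longrightarrow> j < n \<Longrightarrow> \<bar>((T + (s + \<epsilon>) \<cdot>\<^sub>m 1\<^sub>m n) ^\<^sub>m k) $$ (i,j)\<bar> \<le> c * s ^ k"
proof (cases "n = 0")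
  case True
  then show ?thesis using that[of 1 1 0] by simp
next
  case False
  define \<Lambda> where "\<Lambda> = spectrum (map_mat complex_of_real T)"
  have fin: "finite \<Lambda>"
    unfolding \<Lambda>_def using card_finite_spectrum[of "map_mat complex_of_real T" n] T by simp
  obtain \<epsilon> where \<epsilon>: "\<epsilon> > 0" "\<And>l. l \<in> \<Lambda> \<Longrightarrow> Re l + \<epsilon> < 0"
    using stable_mat_margin[OF T stable] unfolding \<Lambda>_def by blast
  define q where "q l = (cmod (l + of_real \<epsilon>))\<^sup>2 / (- 2 * (Re l + \<epsilon>))" for l
  define s where "s = 1 + (\<Sum>l\<in>\<Lambda>. q l)"
  have q0: "q l \<ge> 0" if "l \<in> \<Lambda>" for l using \<epsilon>(2)[OF that] unfolding q_def by simp
  have qs: "q l < s" if "l \<in> \<Lambda>" for l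
    using member_le_sum[of l \<Lambda> q] q0 fin that unfolding s_def by auto
  have s0: "s > 0" unfolding s_def using q0 sum_nonneg[of \<Lambda> q] by force
  define B where "B = (1 / s) \<cdot>\<^sub>m (T + (s + \<epsilon>) \<cdot>\<^sub>m 1\<^sub>m n)"
  have B: "B \<in> carrier_mat n n" unfolding B_def using T by simp
  define Bc where "Bc = map_mat complex_of_real B"
  have Bc: "Bc \<in> carrier_mat n n" unfolding Bc_def using B by simp
  have "cmod z < 1" if "eigenvalue Bc z" for z
  proof -
    define l where "l = of_real s * z - of_real (s + \<epsilon>)"
    have l: "l \<in> \<Lambda>"
      using eigenvalue_scaled_shift[OF T _ that[unfolded Bc_def B_def]] s0
      unfolding l_def \<Lambda>_def spectrum_def by simp
    have "cmod (l + of_real \<epsilon> + of_real s) < s"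
      using cmod_add_of_real_lt[of "l + of_real \<epsilon>" s] \<epsilon>(2)[OF l] qs[OF l] unfolding q_def by simp
    moreover have "l + of_real \<epsilon> + of_real s = of_real s * z"
      unfolding l_def by simp
    ultimately show ?thesis
      using s0 by (simp add: norm_mult)
  qed
  then have "spectral_radius Bc < 1"
    using spectral_radius_mem_max(1)[OF Bc] False unfolding spectrum_def by auto
  then obtain c where "\<And>k i j. i < n \<Longrightarrow> j < n \<Longrightarrow> \<bar>((s \<cdot>\<^sub>m B) ^\<^sub>m k) $$ (i,j)\<bar> \<le> c * s ^ k"
    using pow_smult_entry_bound[OF B] s0 unfolding Bc_def by (metis less_imp_le)
  moreover have "T + (s + \<epsilon>) \<cdot>\<^sub>m 1\<^sub>m n = s \<cdot>\<^sub>m B"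
    unfolding B_def using T s0 by (intro eq_matI) auto
  ultimately show thesis
    using that \<epsilon>(1) s0 by metis
qed

lemma mexp_decay:
  fixes T :: "real mat"
  assumes T: "T \<in> carrier_mat n n"
    and stable: "\<And>\<nu>::complex. eigenvalue (map_mat complex_of_real T) \<nu> \<Longrightarrow> Re \<nu> < 0"
  obtains \<epsilon> c where "\<epsilon> > 0" "\<And>x i j. 0 \<le> x \<Longrightarrow> i < n \<Longrightarrow> j < n \<Longrightarrow> \<bar>mexp T x $$ (i,j)\<bar> \<le> c * exp (- \<epsilon> * x)"
proof -
  obtain \<epsilon> s c where \<epsilon>: "\<epsilon> > 0" and "s > 0"
    and bound: "\<And>k i j. i < n \<Longrightarrow> j < n \<Longrightarrow> \<bar>((T + (s + \<epsilon>) \<cdot>\<^sub>m 1\<^sub>m n) ^\<^sub>m k) $$ (i,j)\<bar> \<le> c * s ^ k"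
    using stable_mat_shift_pow_bound[OF T stable] by blast
  define N where "N = T + (s + \<epsilon>) \<cdot>\<^sub>m 1\<^sub>m n"
  have N: "N \<in> carrier_mat n n" unfolding N_def using T by simp
  have "\<bar>mexp T x $$ (i,j)\<bar> \<le> c * exp (- \<epsilon> * x)" if "0 \<le> x" "i < n" "j < n" for x i j
  proof -
    have "T = N + (- (s + \<epsilon>)) \<cdot>\<^sub>m 1\<^sub>m n" unfolding N_def using T by (intro eq_matI) auto
    then have "\<bar>mexp T x $$ (i,j)\<bar> = exp (- (s + \<epsilon>) * x) * \<bar>mexp N x $$ (i,j)\<bar>"
      using mexp_add_smult_one[OF N that(2,3)] by (simp add: abs_mult)
    also have "\<dots> \<le> exp (- (s + \<epsilon>) * x) * (c * exp (s * x))"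
      using abs_mexp_le_of_pow_bound[OF N that(2,3,1) bound[OF that(2,3), folded N_def]] by simp
    also have "\<dots> = c * exp (- \<epsilon> * x)"
      by (simp add: exp_add[symmetric] algebra_simps)
    finally show ?thesis .
  qed
  then show thesis by (rule that[OF \<epsilon>])
qed

section \<open>Tail moments of matrix-exponential densities\<close>

text \<open>\<open>ME_triple \<alpha> T w\<close> only constrains the dimensions and the spectrum of \<open>T\<close>; it is used below
  for vectors \<open>w\<close> other than the exit vector, such as \<open>(-T)^-1 t\<close>.\<close>
lemma ME_tripleD:
  assumes "ME_triple \<alpha> T w"
  shows "T \<in> carrier_mat (dim_vec \<alpha>) (dim_vec \<alpha>)" "dim_vec w = dim_vec \<alpha>"
    and "\<And>\<nu>::complex. eigenvalue (map_mat complex_of_real T) \<nu> \<Longrightarrow> Re \<nu> < 0"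
  using assms unfolding ME_triple_def by auto

lemma me_fun_exp_bound:
  assumes tr: "ME_triple \<alpha> T w"
  obtains \<epsilon> C where "\<epsilon> > 0" "\<And>x. 0 \<le> x \<Longrightarrow> \<bar>me_fun \<alpha> T w x\<bar> \<le> C * exp (- \<epsilon> * x)"
proof -
  define n where "n = dim_vec \<alpha>"
  note T = ME_tripleD(1)[OF tr, folded n_def] and w = ME_tripleD(2)[OF tr, folded n_def]
  obtain \<epsilon> c where \<epsilon>: "\<epsilon> > 0"
    and c: "\<And>x i j. 0 \<le> x \<Longrightarrow> i < n \<Longrightarrow> j < n \<Longrightarrow> \<bar>mexp T x $$ (i,j)\<bar> \<le> c * exp (- \<epsilon> * x)"
    using mexp_decay[OF T ME_tripleD(3)[OF tr]] by blast
  define K where "K = (\<Sum>i<n. \<Sum>j<n. \<bar>\<alpha> $ i\<bar> * \<bar>w $ j\<bar>)"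
  have "\<bar>me_fun \<alpha> T w x\<bar> \<le> K * c * exp (- \<epsilon> * x)" if x: "0 \<le> x" for x
  proof -
    have "\<bar>me_fun \<alpha> T w x\<bar> \<le> (\<Sum>i<n. \<Sum>j<n. \<bar>\<alpha> $ i * mexp T x $$ (i,j) * w $ j\<bar>)"
      unfolding me_fun_def scalar_prod_mult_mat_vec[OF mexp_carrier[OF T] n_def[symmetric] w]
      by (rule order_trans[OF sum_abs sum_mono[OF sum_abs]])
    also have "\<dots> \<le> (\<Sum>i<n. \<Sum>j<n. \<bar>\<alpha> $ i\<bar> * \<bar>w $ j\<bar> * (c * exp (- \<epsilon> * x)))"
    proof (intro sum_mono)
      fix i j assume "i \<in> {..<n}" "j \<in> {..<n}"
      then have "\<bar>\<alpha> $ i\<bar> * \<bar>w $ j\<bar> * \<bar>mexp T x $$ (i,j)\<bar> \<le> \<bar>\<alpha> $ i\<bar> * \<bar>w $ j\<bar> * (c * exp (- \<epsilon> * x))"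
        using c[OF x] by (intro mult_left_mono) auto
      then show "\<bar>\<alpha> $ i * mexp T x $$ (i,j) * w $ j\<bar> \<le> \<bar>\<alpha> $ i\<bar> * \<bar>w $ j\<bar> * (c * exp (- \<epsilon> * x))"
        by (simp add: abs_mult mult_ac)
    qed
    finally show ?thesis
      by (simp add: K_def sum_distrib_left mult_ac)
  qed
  then show thesis
    using that[OF \<epsilon>] by blast
qed

lemma tendsto_power_mult_me_fun:
  assumes tr: "ME_triple \<alpha> T w"
  shows "((\<lambda>x. x ^ m * me_fun \<alpha> T w x) \<longlongrightarrow> 0) at_top"
proof -
  obtain \<epsilon> C where \<epsilon>: "\<epsilon> > 0" and bound: "\<And>x. 0 \<le> x \<Longrightarrow> \<bar>me_fun \<alpha> T w x\<bar> \<le> C * exp (- \<epsilon> * x)"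
    using me_fun_exp_bound[OF tr] by blast
  show ?thesis
  proof (rule Lim_null_comparison)
    show "\<forall>\<^sub>F x in at_top. norm (x ^ m * me_fun \<alpha> T w x) \<le> C * (x ^ m * exp (- \<epsilon> * x))"
      using eventually_ge_at_top[of "0::real"]
    proof eventually_elim
      case (elim x)
      then have "x ^ m * \<bar>me_fun \<alpha> T w x\<bar> \<le> x ^ m * (C * exp (- \<epsilon> * x))"
        using bound by (intro mult_left_mono) auto
      then show ?case
        using elim by (simp add: abs_mult mult_ac)
    qed
    show "((\<lambda>x. C * (x ^ m * exp (- \<epsilon> * x))) \<longlongrightarrow> 0) at_top"
      using \<epsilon> by real_asymp
  qed
qed

lemma ME_triple_minv:
  assumes tr: "ME_triple \<alpha> T w" and n: "n = dim_vec \<alpha>"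
  shows "minv (- T) \<in> carrier_mat n n" "T * minv (- T) = - 1\<^sub>m n"
proof -
  have T: "T \<in> carrier_mat n n" using ME_tripleD(1)[OF tr] n by simp
  have "det T \<noteq> 0"
  proof
    assume "det T = 0"
    moreover have "char_matrix T 0 = T"
      using T by (intro eq_matI) (auto simp: char_matrix_def)
    ultimately have "eigenvalue T 0"
      using T by (simp add: eigenvalue_det)
    then have "eigenvalue (map_mat complex_of_real T) (of_real 0)"
      by (rule of_real_hom.eigenvalue_hom[OF T])
    then show False
      using ME_tripleD(3)[OF tr] by fastforce
  qed
  then have "- T \<in> Units (ring_mat TYPE(real) n ())"
    using T by (intro det_non_zero_imp_unit) (auto simp: det_0_negate)
  then obtain B where "B \<in> carrier_mat n n" "B * (- T) = 1\<^sub>m n" "(- T) * B = 1\<^sub>m n"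
    unfolding Units_def ring_mat_def by auto
  then have "\<exists>B. inverts_mat (- T) B \<and> inverts_mat B (- T)"
    using T unfolding inverts_mat_def by (intro exI[of _ B]) auto
  then have inv: "inverts_mat (- T) (minv (- T)) \<and> inverts_mat (minv (- T)) (- T)"
    unfolding minv_def by (rule someI_ex)
  then have "dim_row (minv (- T)) = n" "dim_col (minv (- T)) = n"
    using T unfolding inverts_mat_def
    by (metis index_mult_mat(3) index_one_mat(3) uminus_carrier_iff_mat carrier_matD,
        metis index_mult_mat(3) index_one_mat(3) uminus_carrier_iff_mat carrier_matD)
  then show M: "minv (- T) \<in> carrier_mat n n" by auto
  have "- (T * minv (- T)) = 1\<^sub>m n"
    using inv T M unfolding inverts_mat_def by simp
  then show "T * minv (- T) = - 1\<^sub>m n"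
    by (metis uminus_uminus_mat)
qed

lemma me_fun_uminus:
  assumes "T \<in> carrier_mat n n" "dim_vec \<alpha> = n" "dim_vec w = n"
  shows "me_fun \<alpha> T (- w) x = - me_fun \<alpha> T w x"
proof -
  have E: "mexp T x \<in> carrier_mat n n" using assms(1) by simp
  have "mexp T x *\<^sub>v (- w) = - (mexp T x *\<^sub>v w)"
    using E assms(3) by (intro eq_vecI) auto
  moreover have "dim_vec (mexp T x *\<^sub>v w) = n"
    using E by simp
  ultimately show ?thesis
    using assms(2) by (simp add: me_fun_def)
qed

lemma ME_triple_minv_mult:
  assumes "ME_triple \<alpha> T w"
  shows "ME_triple \<alpha> T (minv (- T) *\<^sub>v w)"
  using assms ME_triple_minv(1)[OF assms refl] unfolding ME_triple_def by simp

lemma me_fun_minv_has_real_derivative: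
  assumes tr: "ME_triple \<alpha> T w"
  shows "(me_fun \<alpha> T (minv (- T) *\<^sub>v w) has_real_derivative - me_fun \<alpha> T w x) (at x)"
proof -
  define n where "n = dim_vec \<alpha>"
  note T = ME_tripleD(1)[OF tr, folded n_def] and w = ME_tripleD(2)[OF tr, folded n_def]
  note M = ME_triple_minv[OF tr n_def]
  have "T *\<^sub>v (minv (- T) *\<^sub>v w) = - w"
    using assoc_mult_mat_vec[OF T M(1) carrier_vecI[OF w], symmetric] M(2) carrier_vecI[OF w] by simp
  then show ?thesis
    using me_fun_has_real_derivative[OF T n_def[symmetric], of "minv (- T) *\<^sub>v w" x] M(1)
    by (simp add: me_fun_uminus[OF T n_def[symmetric] w])
qed

text \<open>\<open>me_tail_moment \<alpha> T w v m\<close> is \<open>\<integral>_v^\<infinity> y^m \<alpha> exp(T y) w dy\<close> (see \<open>ME_tail_integral\<close>),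
  unrolled by integration by parts: \<open>\<alpha> exp(T y) (-T)^-1 w\<close> is the tail integral of
  \<open>\<alpha> exp(T y) w\<close>.\<close>
fun me_tail_moment :: "real vec \<Rightarrow> real mat \<Rightarrow> real vec \<Rightarrow> real \<Rightarrow> nat \<Rightarrow> real" where
  "me_tail_moment \<alpha> T w v 0 = me_fun \<alpha> T (minv (- T) *\<^sub>v w) v"
| "me_tail_moment \<alpha> T w v (Suc m) =
    v ^ Suc m * me_fun \<alpha> T (minv (- T) *\<^sub>v w) v + Suc m * me_tail_moment \<alpha> T (minv (- T) *\<^sub>v w) v m"

lemma me_tail_moment_has_real_derivative:
  assumes "ME_triple \<alpha> T w"
  shows "((\<lambda>y. me_tail_moment \<alpha> T w y m) has_real_derivative - (y ^ m * me_fun \<alpha> T w y)) (at y)"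
  using assms
proof (induction m arbitrary: w)
  case 0
  then show ?case using me_fun_minv_has_real_derivative by simp
next
  case (Suc m)
  have "((\<lambda>y. y ^ Suc m * me_fun \<alpha> T (minv (- T) *\<^sub>v w) y + Suc m * me_tail_moment \<alpha> T (minv (- T) *\<^sub>v w) y m)
      has_real_derivative
      Suc m * y ^ (Suc m - Suc 0) * me_fun \<alpha> T (minv (- T) *\<^sub>v w) y + - me_fun \<alpha> T w y * y ^ Suc m
      + Suc m * - (y ^ m * me_fun \<alpha> T (minv (- T) *\<^sub>v w) y)) (at y)"
    by (intro DERIV_add DERIV_mult DERIV_cmult DERIV_pow me_fun_minv_has_real_derivative Suc
        ME_triple_minv_mult)
  then show ?case
    by (simp add: algebra_simps)
qed

lemma tendsto_me_tail_moment:
  assumes "ME_triple \<alpha> T w"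
  shows "((\<lambda>y. me_tail_moment \<alpha> T w y m) \<longlongrightarrow> 0) at_top"
  using assms
proof (induction m arbitrary: w)
  case 0
  then show ?case
    using tendsto_power_mult_me_fun[OF ME_triple_minv_mult, of \<alpha> T w 0] by simp
next
  case (Suc m)
  have tr: "ME_triple \<alpha> T (minv (- T) *\<^sub>v w)"
    using ME_triple_minv_mult[OF Suc.prems] .
  have "((\<lambda>y. y ^ Suc m * me_fun \<alpha> T (minv (- T) *\<^sub>v w) y + Suc m * me_tail_moment \<alpha> T (minv (- T) *\<^sub>v w) y m)
      \<longlongrightarrow> 0 + 0) at_top"
    by (intro tendsto_add tendsto_power_mult_me_fun[OF tr] tendsto_mult_right_zero Suc.IH[OF tr])
  then show ?case
    by simp
qed

lemma tail_integral_FTC: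
  fixes g G :: "real \<Rightarrow> real"
  assumes G: "\<And>x. (G has_real_derivative g x) (at x)"
    and g: "\<And>x. isCont g x" "\<And>x. v < x \<Longrightarrow> 0 \<le> g x"
    and lim: "(G \<longlongrightarrow> 0) at_top"
  shows "integrable lborel (\<lambda>x. indicator {v<..} x * g x)"
    and "(\<integral>x. indicator {v<..} x * g x \<partial>lborel) = - G v"
proof -
  have "(G \<longlongrightarrow> G v) (at_right v)"
    using DERIV_isCont[OF G, of v] unfolding isCont_def by (rule tendsto_within_subset) simp
  then have left: "((G \<circ> real_of_ereal) \<longlongrightarrow> G v) (at_right (ereal v))"
    unfolding ereal_tendsto_simps .
  have right: "((G \<circ> real_of_ereal) \<longlongrightarrow> 0) (at_left (\<infinity>::ereal))"
    unfolding ereal_tendsto_simps by (rule lim)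
  have nonneg: "AE x in lborel. ereal v < ereal x \<longrightarrow> ereal x < \<infinity> \<longrightarrow> 0 \<le> g x"
    using g(2) by simp
  note FTC = interval_integral_FTC_nonneg[of "ereal v" \<infinity> G g, OF _ G g(1) nonneg left right]
  then show "integrable lborel (\<lambda>x. indicator {v<..} x * g x)"
    by (simp add: set_integrable_def)
  show "(\<integral>x. indicator {v<..} x * g x \<partial>lborel) = - G v"
    using FTC by (simp add: interval_lebesgue_integral_def set_lebesgue_integral_def)
qed

lemma ME_tail_integral:
  assumes dens: "ME_density \<alpha> T t" and v: "0 \<le> v"
  shows "integrable lborel (\<lambda>y. indicator {v<..} y * (y ^ m * me_fun \<alpha> T t y))"
    and "(\<integral>y. indicator {v<..} y * (y ^ m * me_fun \<alpha> T t y) \<partial>lborel) = me_tail_moment \<alpha> T t v m"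
proof -
  have tr: "ME_triple \<alpha> T t" using dens unfolding ME_density_def by simp
  have "isCont (me_fun \<alpha> T t) y" for y
    using me_fun_has_real_derivative[OF ME_tripleD(1)[OF tr] refl ME_tripleD(2)[OF tr]]
    by (rule DERIV_isCont)
  then have cont: "isCont (\<lambda>y. y ^ m * me_fun \<alpha> T t y) y" for y
    by (intro continuous_intros) auto
  have deriv: "((\<lambda>y. - me_tail_moment \<alpha> T t y m) has_real_derivative y ^ m * me_fun \<alpha> T t y) (at y)" for y
    using DERIV_minus[OF me_tail_moment_has_real_derivative[OF tr]] by simp
  have nonneg: "0 \<le> y ^ m * me_fun \<alpha> T t y" if "v < y" for y
    using dens that v unfolding ME_density_def by simp
  have lim: "((\<lambda>y. - me_tail_moment \<alpha> T t y m) \<longlongrightarrow> 0) at_top"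
    using tendsto_minus[OF tendsto_me_tail_moment[OF tr]] by simp
  note FTC = tail_integral_FTC[OF deriv cont nonneg lim]
  show "integrable lborel (\<lambda>y. indicator {v<..} y * (y ^ m * me_fun \<alpha> T t y))"
    using FTC by simp
  show "(\<integral>y. indicator {v<..} y * (y ^ m * me_fun \<alpha> T t y) \<partial>lborel) = me_tail_moment \<alpha> T t v m"
    using FTC by simp
qed

lemma me_tail_moment_0: "me_tail_moment \<alpha> T t v 0 = me_surv \<alpha> T t v"
  by (simp add: me_surv_def me_fun_def me_l_def)

lemma me_tail_moment_eq_0:
  assumes dens: "ME_density \<alpha> T t" and v: "0 \<le> v" and S: "me_surv \<alpha> T t v = 0"
  shows "me_tail_moment \<alpha> T t v m = 0"
proof -
  define f where "f = (\<lambda>y. indicator {v<..} y * me_fun \<alpha> T t y)"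
  have int: "integrable lborel f"
    using ME_tail_integral(1)[OF dens v, of 0] by (simp add: f_def)
  have "integral\<^sup>L lborel f = 0"
    using ME_tail_integral(2)[OF dens v, of 0, unfolded me_tail_moment_0] S by (simp add: f_def)
  moreover have "AE y in lborel. 0 \<le> f y"
    using dens v by (auto simp: f_def ME_density_def indicator_def)
  ultimately have "AE y in lborel. f y = 0"
    using integral_nonneg_eq_0_iff_AE[OF int] by simp
  then have "AE y in lborel. indicator {v<..} y * (y ^ m * me_fun \<alpha> T t y) = 0"
    by eventually_elim (auto simp: f_def)
  then show ?thesis
    using ME_tail_integral(2)[OF dens v, of m] integral_eq_zero_AE by metis
qed

lemma alphaRL_scalar_prod:
  assumes tr: "ME_triple \<alpha> T t" and w: "dim_vec w = dim_vec \<alpha>"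
  shows "alphaRL \<alpha> T t z \<bullet> w = me_fun \<alpha> T w z / me_surv \<alpha> T t z"
proof -
  define n where "n = dim_vec \<alpha>"
  have E: "mexp T z \<in> carrier_mat n n"
    using ME_tripleD(1)[OF tr] unfolding n_def by simp
  have \<alpha>: "\<alpha> \<in> carrier_vec n" and w: "w \<in> carrier_vec n"
    using w unfolding n_def by (auto intro: carrier_vecI)
  have "transpose_mat (mexp T z) *\<^sub>v \<alpha> \<in> carrier_vec n"
    using E \<alpha> by simp
  then have "alphaRL \<alpha> T t z \<bullet> w = 1 / me_surv \<alpha> T t z * ((transpose_mat (mexp T z) *\<^sub>v \<alpha>) \<bullet> w)"
    unfolding alphaRL_def using w by (rule smult_scalar_prod_distrib)
  also have "(transpose_mat (mexp T z) *\<^sub>v \<alpha>) \<bullet> w = me_fun \<alpha> T w z"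
    unfolding me_fun_def by (rule transpose_vec_mult_scalar[OF E w \<alpha>])
  finally show ?thesis
    by simp
qed

text \<open>Given \<open>Y > v\<close>, the overshoot \<open>Y - v\<close> is ME with representation \<open>(alphaRL \<alpha> T t v, T, t)\<close>,
  so its \<open>k\<close>-th moment is \<open>k! alphaRL \<alpha> T t v (-T)^-(k+1) t\<close>; the brackets below are
  \<open>E[Y | Y > v]\<close> and \<open>E[Y^2 | Y > v]\<close> in these terms.\<close>
lemma me_tail_moment_residual_life:
  assumes dens: "ME_density \<alpha> T t" and v: "0 \<le> v"
  defines "a \<equiv> alphaRL \<alpha> T t v \<bullet> ((minv (- T) ^\<^sub>m 2) *\<^sub>v t)"
    and "b \<equiv> alphaRL \<alpha> T t v \<bullet> ((minv (- T) ^\<^sub>m 3) *\<^sub>v t)"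
  shows "me_tail_moment \<alpha> T t v 1 = me_surv \<alpha> T t v * (v + a)"
    and "me_tail_moment \<alpha> T t v 2 = me_surv \<alpha> T t v * (v\<^sup>2 + 2 * v * a + 2 * b)"
proof -
  have tr: "ME_triple \<alpha> T t" using dens unfolding ME_density_def by simp
  define n where "n = dim_vec \<alpha>"
  define N where "N = minv (- T)"
  have N: "N \<in> carrier_mat n n" unfolding N_def by (rule ME_triple_minv(1)[OF tr n_def])
  have t: "t \<in> carrier_vec n" using ME_tripleD(2)[OF tr] unfolding n_def by (rule carrier_vecI)
  have N1: "(N ^\<^sub>m 1) *\<^sub>v u = N *\<^sub>v u" for u
    using N by simp
  have N2: "(N ^\<^sub>m 2) *\<^sub>v t = N *\<^sub>v (N *\<^sub>v t)"
    using pow_mult_mat_vec_Suc[OF N t, of 1] by (simp add: N1 numeral_2_eq_2)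
  have N3: "(N ^\<^sub>m 3) *\<^sub>v t = N *\<^sub>v (N *\<^sub>v (N *\<^sub>v t))"
    using pow_mult_mat_vec_Suc[OF N t, of 2] pow_mult_mat_vec_Suc[OF N mult_mat_vec_carrier[OF N t], of 1]
    by (simp add: N1 numeral_2_eq_2 numeral_3_eq_3)
  have S: "me_fun \<alpha> T (N *\<^sub>v t) v = me_surv \<alpha> T t v"
    by (simp add: N_def me_surv_def me_fun_def me_l_def)
  have tail1: "me_tail_moment \<alpha> T t v 1 = v * me_surv \<alpha> T t v + me_fun \<alpha> T (N *\<^sub>v (N *\<^sub>v t)) v"
    by (simp add: N_def[symmetric] S)
  have tail2: "me_tail_moment \<alpha> T t v 2 = v\<^sup>2 * me_surv \<alpha> T t v
      + 2 * (v * me_fun \<alpha> T (N *\<^sub>v (N *\<^sub>v t)) v + me_fun \<alpha> T (N *\<^sub>v (N *\<^sub>v (N *\<^sub>v t))) v)"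
    by (simp add: numeral_2_eq_2 N_def[symmetric] S)
  have "me_fun \<alpha> T (N *\<^sub>v (N *\<^sub>v t)) v = me_surv \<alpha> T t v * a
      \<and> me_fun \<alpha> T (N *\<^sub>v (N *\<^sub>v (N *\<^sub>v t))) v = me_surv \<alpha> T t v * b"
  proof (cases "me_surv \<alpha> T t v = 0")
    case True
    then show ?thesis
      using me_tail_moment_eq_0[OF dens v True, of 1] me_tail_moment_eq_0[OF dens v True, of 2]
      unfolding tail1 tail2 by simp
  next
    case False
    have "a = me_fun \<alpha> T (N *\<^sub>v (N *\<^sub>v t)) v / me_surv \<alpha> T t v"
      "b = me_fun \<alpha> T (N *\<^sub>v (N *\<^sub>v (N *\<^sub>v t))) v / me_surv \<alpha> T t v"
      using N t unfolding a_def b_def N_def[symmetric] N2 N3 n_def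
      by (simp_all add: alphaRL_scalar_prod[OF tr])
    then show ?thesis
      using False by simp
  qed
  then show "me_tail_moment \<alpha> T t v 1 = me_surv \<alpha> T t v * (v + a)"
    "me_tail_moment \<alpha> T t v 2 = me_surv \<alpha> T t v * (v\<^sup>2 + 2 * v * a + 2 * b)"
    unfolding tail1 tail2 by (simp_all add: algebra_simps)
qed

section \<open>Conditional moments of the mixture\<close>

lemma VaR_nonneg:
  assumes P: "prob_space P" and Y: "Y \<in> borel_measurable P" and \<theta>: "\<theta> < 1"
  shows "0 \<le> VaR P Y \<theta>"
proof -
  interpret prob_space P by (fact P)
  have cdf: "dist_fun P Y y = cdf (distr P borel Y) y" for y
    using Y by (simp add: dist_fun_def cdf_def measure_distr vimage_def Int_def conj_commute)
  have "\<forall>\<^sub>F y in at_top. \<theta> < cdf (distr P borel Y) y \<and> 0 \<le> y"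
    using order_tendstoD(1)[OF real_distribution.cdf_lim_at_top_prob \<theta>] Y eventually_ge_at_top
    by (auto intro: eventually_conj)
  then obtain y where "\<theta> < dist_fun P Y y" "0 \<le> y"
    unfolding cdf by (auto simp: eventually_at_top_linorder)
  then have "{y. 0 \<le> y \<and> \<theta> \<le> dist_fun P Y y} \<noteq> {}"
    by auto
  then show ?thesis
    unfolding VaR_def by (rule cInf_greatest) simp
qed

lemma prod_if_mem_exponent:
  fixes F :: "'i \<Rightarrow> nat \<Rightarrow> 'a :: comm_monoid_mult"
  assumes "finite K" "J \<subseteq> K" "\<And>k. k \<in> J \<Longrightarrow> F k m = F k 0 * c k"
  shows "(\<Prod>k\<in>K. F k (if k \<in> J then m else 0)) = (\<Prod>k\<in>K. F k 0) * (\<Prod>k\<in>J. c k)"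
proof -
  have "(\<Prod>k\<in>K. F k (if k \<in> J then m else 0)) = (\<Prod>k\<in>K. F k 0 * (if k \<in> J then c k else 1))"
    using assms(3) by (intro prod.cong) auto
  also have "\<dots> = (\<Prod>k\<in>K. F k 0) * (\<Prod>k\<in>K \<inter> J. c k)"
    by (simp add: prod.distrib prod.inter_restrict[OF assms(1)])
  finally show ?thesis
    using assms(2) by (simp add: Int_absorb1)
qed

lemma idx_set_mem: "i \<in> idx_set L M \<Longrightarrow> k < M \<Longrightarrow> i k < L"
  unfolding idx_set_def by auto

text \<open>\<open>mmeam_fun\<close> is 0 off the nonnegative orthant, where the indicators vanish as well
  because \<open>v \<ge> 0\<close>.\<close>
lemma mmeam_fun_mult_tail:
  assumes v: "\<And>k. k < M \<Longrightarrow> 0 \<le> v k"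
  shows "mmeam_fun L M p \<alpha> T t x * (\<Prod>k<M. indicator {v k<..} (x k) * x k ^ e k)
    = (\<Sum>i\<in>idx_set L M. p i * (\<Prod>k<M. indicator {v k<..} (x k) *
        (x k ^ e k * me_fun (\<alpha> (i k)) (T (i k)) (t (i k)) (x k))))"
proof -
  have prod_eq: "(\<Prod>k<M. indicator {v k<..} (x k) * (x k ^ e k * me_fun (\<alpha> (i k)) (T (i k)) (t (i k)) (x k)))
      = (\<Prod>k<M. me_fun (\<alpha> (i k)) (T (i k)) (t (i k)) (x k)) * (\<Prod>k<M. indicator {v k<..} (x k) * x k ^ e k)"
    for i :: "nat \<Rightarrow> nat"
    by (simp add: prod.distrib mult_ac)
  have "(\<Sum>i\<in>idx_set L M. p i * (\<Prod>k<M. indicator {v k<..} (x k) *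
        (x k ^ e k * me_fun (\<alpha> (i k)) (T (i k)) (t (i k)) (x k))))
      = (\<Sum>i\<in>idx_set L M. p i * (\<Prod>k<M. me_fun (\<alpha> (i k)) (T (i k)) (t (i k)) (x k)))
        * (\<Prod>k<M. indicator {v k<..} (x k) * x k ^ e k)"
    unfolding prod_eq by (simp add: sum_distrib_right mult.assoc)
  moreover have "(\<Prod>k<M. indicator {v k<..} (x k) * x k ^ e k) = (0::real)" if neg: "\<not> (\<forall>k<M. 0 \<le> x k)"
  proof -
    obtain k where "k < M" "x k < 0" using neg by (auto simp: not_le)
    then have "indicator {v k<..} (x k) = (0::real)" using v[of k] by simp
    then show ?thesis using \<open>k < M\<close> by (intro prod_zero bexI[of _ k]) auto
  qed
  ultimately show ?thesis
    by (cases "\<forall>k<M. 0 \<le> x k") (simp_all add: mmeam_fun_def)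
qed

lemma mmeam_tail_integral:
  assumes dens: "\<And>j. j < L \<Longrightarrow> ME_density (\<alpha> j) (T j) (t j)"
    and fnonneg: "\<And>x. (\<forall>k<M. 0 \<le> x k) \<Longrightarrow> 0 \<le> mmeam_fun L M p \<alpha> T t x"
    and distr: "distributed P (PiM {..<M} (\<lambda>_. lborel)) X (\<lambda>x. ennreal (mmeam_fun L M p \<alpha> T t x))"
    and v: "\<And>k. k < M \<Longrightarrow> 0 \<le> v k"
  shows "(\<integral>\<omega>. (\<Prod>k<M. indicator {v k<..} (X \<omega> k) * X \<omega> k ^ e k) \<partial>P)
    = (\<Sum>i\<in>idx_set L M. p i * (\<Prod>k<M. me_tail_moment (\<alpha> (i k)) (T (i k)) (t (i k)) (v k) (e k)))"
proof -
  interpret product_sigma_finite "\<lambda>_::nat. lborel"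
    by (simp add: product_sigma_finite_def lborel.sigma_finite_measure_axioms)
  define h where "h i k y = indicator {v k<..} y * (y ^ e k * me_fun (\<alpha> (i k)) (T (i k)) (t (i k)) y)" for i k y
  have h: "integrable lborel (h i k)" "integral\<^sup>L lborel (h i k) = me_tail_moment (\<alpha> (i k)) (T (i k)) (t (i k)) (v k) (e k)"
    if "i \<in> idx_set L M" "k \<in> {..<M}" for i k
    using ME_tail_integral[OF dens[OF idx_set_mem[OF that(1)]] v] that unfolding h_def by auto
  have "0 \<le> mmeam_fun L M p \<alpha> T t x" for x
    using fnonneg[of x] unfolding mmeam_fun_def by auto
  then have "(\<integral>\<omega>. (\<Prod>k<M. indicator {v k<..} (X \<omega> k) * X \<omega> k ^ e k) \<partial>P)
      = (\<integral>x. mmeam_fun L M p \<alpha> T t x * (\<Prod>k<M. indicator {v k<..} (x k) * x k ^ e k) \<partial>PiM {..<M} (\<lambda>_. lborel))"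
    by (intro distributed_integral[OF distr, symmetric]) measurable
  also have "\<dots> = (\<integral>x. (\<Sum>i\<in>idx_set L M. p i * (\<Prod>k<M. h i k (x k))) \<partial>PiM {..<M} (\<lambda>_. lborel))"
    using mmeam_fun_mult_tail[OF v] by (intro Bochner_Integration.integral_cong) (auto simp: h_def)
  also have "\<dots> = (\<Sum>i\<in>idx_set L M. p i * (\<integral>x. (\<Prod>k<M. h i k (x k)) \<partial>PiM {..<M} (\<lambda>_. lborel)))"
    using h(1) by (subst Bochner_Integration.integral_sum) (auto intro!: integrable_mult_right product_integrable_prod)
  also have "\<dots> = (\<Sum>i\<in>idx_set L M. p i * (\<Prod>k<M. me_tail_moment (\<alpha> (i k)) (T (i k)) (t (i k)) (v k) (e k)))"
  proof (intro sum.cong refl arg_cong2[where f = "(*)"])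
    fix i assume i: "i \<in> idx_set L M"
    have "(\<integral>x. (\<Prod>k<M. h i k (x k)) \<partial>PiM {..<M} (\<lambda>_. lborel)) = (\<Prod>k<M. integral\<^sup>L lborel (h i k))"
      by (rule product_integral_prod) (use h(1) i in auto)
    then show "(\<integral>x. (\<Prod>k<M. h i k (x k)) \<partial>PiM {..<M} (\<lambda>_. lborel))
        = (\<Prod>k<M. me_tail_moment (\<alpha> (i k)) (T (i k)) (t (i k)) (v k) (e k))"
      using h(2) i by simp
  qed
  finally show ?thesis .
qed

lemma indicator_tail_event:
  fixes X :: "'a \<Rightarrow> nat \<Rightarrow> real"
  assumes "E = {\<omega> \<in> space P. \<forall>k<M. v k < X \<omega> k}" "\<omega> \<in> space P"
  shows "indicator E \<omega> = (\<Prod>k<M. indicator {v k<..} (X \<omega> k) :: real)"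
proof (cases "\<forall>k<M. v k < X \<omega> k")
  case False
  then obtain k where "k < M" "\<not> v k < X \<omega> k" by auto
  then have "(\<Prod>k<M. indicator {v k<..} (X \<omega> k) :: real) = 0"
    by (intro prod_zero bexI[of _ k]) auto
  then show ?thesis using assms False by simp
qed (use assms in simp)

lemma measure_tail_event:
  assumes dens: "\<And>j. j < L \<Longrightarrow> ME_density (\<alpha> j) (T j) (t j)"
    and fnonneg: "\<And>x. (\<forall>k<M. 0 \<le> x k) \<Longrightarrow> 0 \<le> mmeam_fun L M p \<alpha> T t x"
    and distr: "distributed P (PiM {..<M} (\<lambda>_. lborel)) X (\<lambda>x. ennreal (mmeam_fun L M p \<alpha> T t x))"
    and v: "\<And>k. k < M \<Longrightarrow> 0 \<le> v k"
    and E: "E = {\<omega> \<in> space P. \<forall>k<M. v k < X \<omega> k}"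
  shows "measure P E = (\<Sum>i\<in>idx_set L M. p i * (\<Prod>k<M. me_surv (\<alpha> (i k)) (T (i k)) (t (i k)) (v k)))"
proof -
  have "measure P E = integral\<^sup>L P (indicator E)"
    using E by (simp add: Int_absorb2)
  also have "\<dots> = (\<integral>\<omega>. (\<Prod>k<M. indicator {v k<..} (X \<omega> k) * X \<omega> k ^ 0) \<partial>P)"
    using indicator_tail_event[OF E] by (intro Bochner_Integration.integral_cong) auto
  also have "\<dots> = (\<Sum>i\<in>idx_set L M. p i * (\<Prod>k<M. me_tail_moment (\<alpha> (i k)) (T (i k)) (t (i k)) (v k) 0))"
    by (rule mmeam_tail_integral[OF dens fnonneg distr v])
  finally show ?thesis
    by (simp only: me_tail_moment_0)
qed

lemma cond_exp_event_tail_prod: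
  assumes dens: "\<And>j. j < L \<Longrightarrow> ME_density (\<alpha> j) (T j) (t j)"
    and fnonneg: "\<And>x. (\<forall>k<M. 0 \<le> x k) \<Longrightarrow> 0 \<le> mmeam_fun L M p \<alpha> T t x"
    and distr: "distributed P (PiM {..<M} (\<lambda>_. lborel)) X (\<lambda>x. ennreal (mmeam_fun L M p \<alpha> T t x))"
    and v: "\<And>k. k < M \<Longrightarrow> 0 \<le> v k"
    and E: "E = {\<omega> \<in> space P. \<forall>k<M. v k < X \<omega> k}"
    and J: "J \<subseteq> {..<M}"
    and c: "\<And>i k. i \<in> idx_set L M \<Longrightarrow> k \<in> J \<Longrightarrow>
      me_tail_moment (\<alpha> (i k)) (T (i k)) (t (i k)) (v k) m = me_surv (\<alpha> (i k)) (T (i k)) (t (i k)) (v k) * c i k"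
  shows "cond_exp_event P (\<lambda>\<omega>. \<Prod>k\<in>J. X \<omega> k ^ m) E = (\<Sum>i\<in>idx_set L M. pRL L M p \<alpha> T t v i * (\<Prod>k\<in>J. c i k))"
proof -
  have "(\<integral>\<omega>. indicator E \<omega> * (\<Prod>k\<in>J. X \<omega> k ^ m) \<partial>P)
      = (\<integral>\<omega>. (\<Prod>k<M. indicator {v k<..} (X \<omega> k) * X \<omega> k ^ (if k \<in> J then m else 0)) \<partial>P)"
  proof (intro Bochner_Integration.integral_cong refl)
    fix \<omega> assume "\<omega> \<in> space P"
    then show "indicator E \<omega> * (\<Prod>k\<in>J. X \<omega> k ^ m)
        = (\<Prod>k<M. indicator {v k<..} (X \<omega> k) * X \<omega> k ^ (if k \<in> J then m else 0))"
      using prod_if_mem_exponent[OF finite_lessThan J, of "\<lambda>k e. X \<omega> k ^ e" m "\<lambda>k. X \<omega> k ^ m"]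
      by (simp add: indicator_tail_event[OF E] prod.distrib)
  qed
  also have "\<dots> = (\<Sum>i\<in>idx_set L M. p i * (\<Prod>k<M. me_tail_moment (\<alpha> (i k)) (T (i k)) (t (i k)) (v k)
      (if k \<in> J then m else 0)))"
    by (rule mmeam_tail_integral[OF dens fnonneg distr v])
  also have "\<dots> = (\<Sum>i\<in>idx_set L M. p i * (\<Prod>k<M. me_surv (\<alpha> (i k)) (T (i k)) (t (i k)) (v k)) * (\<Prod>k\<in>J. c i k))"
  proof (intro sum.cong refl)
    fix i assume "i \<in> idx_set L M"
    then show "p i * (\<Prod>k<M. me_tail_moment (\<alpha> (i k)) (T (i k)) (t (i k)) (v k) (if k \<in> J then m else 0))
        = p i * (\<Prod>k<M. me_surv (\<alpha> (i k)) (T (i k)) (t (i k)) (v k)) * (\<Prod>k\<in>J. c i k)"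
      using prod_if_mem_exponent[OF finite_lessThan J,
          of "\<lambda>k e. me_tail_moment (\<alpha> (i k)) (T (i k)) (t (i k)) (v k) e" m "c i"] c
      by (simp only: me_tail_moment_0 mult.assoc)
  qed
  finally show ?thesis
    unfolding cond_exp_event_def pRL_def
    by (simp add: sum_divide_distrib measure_tail_event[OF dens fnonneg distr v E])
qed

lemma sum_pRL:
  assumes "(\<Sum>h\<in>idx_set L M. p h * (\<Prod>k<M. me_surv (\<alpha> (h k)) (T (h k)) (t (h k)) (z k))) \<noteq> 0"
  shows "(\<Sum>i\<in>idx_set L M. pRL L M p \<alpha> T t z i) = 1"
  using assms unfolding pRL_def by (simp add: sum_divide_distrib[symmetric])

lemma mmeam_cond_moments:
  assumes dens: "\<And>j. j < L \<Longrightarrow> ME_density (\<alpha> j) (T j) (t j)"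
    and fnonneg: "\<And>x. (\<forall>k<M. 0 \<le> x k) \<Longrightarrow> 0 \<le> mmeam_fun L M p \<alpha> T t x"
    and distr: "distributed P (PiM {..<M} (\<lambda>_. lborel)) X (\<lambda>x. ennreal (mmeam_fun L M p \<alpha> T t x))"
    and v: "\<And>k. k < M \<Longrightarrow> 0 \<le> v k"
    and E: "E = {\<omega> \<in> space P. \<forall>k<M. v k < X \<omega> k}"
  defines "a \<equiv> \<lambda>i j. alphaRL (\<alpha> (i j)) (T (i j)) (t (i j)) (v j) \<bullet> ((minv (- T (i j)) ^\<^sub>m 2) *\<^sub>v t (i j))"
    and "b \<equiv> \<lambda>i j. alphaRL (\<alpha> (i j)) (T (i j)) (t (i j)) (v j) \<bullet> ((minv (- T (i j)) ^\<^sub>m 3) *\<^sub>v t (i j))"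
  shows "j < M \<Longrightarrow> cond_exp_event P (\<lambda>\<omega>. X \<omega> j) E
      = (\<Sum>i\<in>idx_set L M. pRL L M p \<alpha> T t v i * (v j + a i j))"
    and "j < M \<Longrightarrow> cond_exp_event P (\<lambda>\<omega>. (X \<omega> j)\<^sup>2) E
      = (\<Sum>i\<in>idx_set L M. pRL L M p \<alpha> T t v i * ((v j)\<^sup>2 + 2 * v j * a i j + 2 * b i j))"
    and "j1 < M \<Longrightarrow> j2 < M \<Longrightarrow> j1 \<noteq> j2 \<Longrightarrow> cond_exp_event P (\<lambda>\<omega>. X \<omega> j1 * X \<omega> j2) E
      = (\<Sum>i\<in>idx_set L M. pRL L M p \<alpha> T t v i * ((v j1 + a i j1) * (v j2 + a i j2)))"
proof -
  have tail: "me_tail_moment (\<alpha> (i k)) (T (i k)) (t (i k)) (v k) 1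
      = me_surv (\<alpha> (i k)) (T (i k)) (t (i k)) (v k) * (v k + a i k)"
    "me_tail_moment (\<alpha> (i k)) (T (i k)) (t (i k)) (v k) 2
      = me_surv (\<alpha> (i k)) (T (i k)) (t (i k)) (v k) * ((v k)\<^sup>2 + 2 * v k * a i k + 2 * b i k)"
    if "i \<in> idx_set L M" "k < M" for i k
    using me_tail_moment_residual_life[OF dens[OF idx_set_mem[OF that]] v[OF that(2)]]
    unfolding a_def b_def by (simp_all del: me_tail_moment.simps)
  note cond = cond_exp_event_tail_prod[OF dens fnonneg distr v E]
  show "cond_exp_event P (\<lambda>\<omega>. X \<omega> j) E = (\<Sum>i\<in>idx_set L M. pRL L M p \<alpha> T t v i * (v j + a i j))"
    if "j < M"
    using cond[of "{j}" 1 "\<lambda>i k. v k + a i k"] tail(1) that by simp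
  show "cond_exp_event P (\<lambda>\<omega>. (X \<omega> j)\<^sup>2) E
      = (\<Sum>i\<in>idx_set L M. pRL L M p \<alpha> T t v i * ((v j)\<^sup>2 + 2 * v j * a i j + 2 * b i j))"
    if "j < M"
    using cond[of "{j}" 2 "\<lambda>i k. (v k)\<^sup>2 + 2 * v k * a i k + 2 * b i k"] tail(2) that by simp
  show "cond_exp_event P (\<lambda>\<omega>. X \<omega> j1 * X \<omega> j2) E
      = (\<Sum>i\<in>idx_set L M. pRL L M p \<alpha> T t v i * ((v j1 + a i j1) * (v j2 + a i j2)))"
    if "j1 < M" "j2 < M" "j1 \<noteq> j2"
  proof -
    have "cond_exp_event P (\<lambda>\<omega>. \<Prod>k\<in>{j1, j2}. X \<omega> k ^ 1) E
        = (\<Sum>i\<in>idx_set L M. pRL L M p \<alpha> T t v i * (\<Prod>k\<in>{j1, j2}. v k + a i k))"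
      by (rule cond) (use that tail(1) in auto)
    then show ?thesis
      using that(3) by simp
  qed
qed

lemma sum_prob_weights:
  fixes \<pi> :: "'i \<Rightarrow> real"
  assumes "sum \<pi> I = 1"
  shows "(\<Sum>i\<in>I. \<pi> i * (x + a i)) = x + (\<Sum>i\<in>I. \<pi> i * a i)"
    and "(\<Sum>i\<in>I. \<pi> i * (x\<^sup>2 + 2 * x * a i + 2 * b i))
      = - x\<^sup>2 + 2 * x * (x + (\<Sum>i\<in>I. \<pi> i * a i)) + 2 * (\<Sum>i\<in>I. \<pi> i * b i)"
    and "(\<Sum>i\<in>I. \<pi> i * ((x + a i) * (y + c i)))
      = - (x * y) + x * (y + (\<Sum>i\<in>I. \<pi> i * c i)) + y * (x + (\<Sum>i\<in>I. \<pi> i * a i))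
        + (\<Sum>i\<in>I. \<pi> i * (a i * c i))"
proof -
  have const: "(\<Sum>i\<in>I. \<pi> i * z) = z" for z
    using assms by (simp add: sum_distrib_right[symmetric])
  show "(\<Sum>i\<in>I. \<pi> i * (x + a i)) = x + (\<Sum>i\<in>I. \<pi> i * a i)"
    by (simp add: distrib_left sum.distrib const)
  have "(\<Sum>i\<in>I. \<pi> i * (x\<^sup>2 + 2 * x * a i + 2 * b i))
      = (\<Sum>i\<in>I. \<pi> i * x\<^sup>2) + 2 * x * (\<Sum>i\<in>I. \<pi> i * a i) + 2 * (\<Sum>i\<in>I. \<pi> i * b i)"
    by (simp add: distrib_left sum.distrib sum_distrib_left mult_ac)
  also have "(\<Sum>i\<in>I. \<pi> i * x\<^sup>2) = x\<^sup>2"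
    by (rule const)
  finally show "(\<Sum>i\<in>I. \<pi> i * (x\<^sup>2 + 2 * x * a i + 2 * b i))
      = - x\<^sup>2 + 2 * x * (x + (\<Sum>i\<in>I. \<pi> i * a i)) + 2 * (\<Sum>i\<in>I. \<pi> i * b i)"
    by (simp add: algebra_simps power2_eq_square)
  have "(\<Sum>i\<in>I. \<pi> i * ((x + a i) * (y + c i)))
      = (\<Sum>i\<in>I. \<pi> i * (x * y)) + x * (\<Sum>i\<in>I. \<pi> i * c i) + y * (\<Sum>i\<in>I. \<pi> i * a i)
        + (\<Sum>i\<in>I. \<pi> i * (a i * c i))"
    by (simp add: algebra_simps sum.distrib sum_distrib_left)
  also have "(\<Sum>i\<in>I. \<pi> i * (x * y)) = x * y"
    by (rule const)
  finally show "(\<Sum>i\<in>I. \<pi> i * ((x + a i) * (y + c i)))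
      = - (x * y) + x * (y + (\<Sum>i\<in>I. \<pi> i * c i)) + y * (x + (\<Sum>i\<in>I. \<pi> i * a i))
        + (\<Sum>i\<in>I. \<pi> i * (a i * c i))"
    by (simp add: algebra_simps)
qed

theorem theorem9:
  fixes P :: "'a measure" and X :: "'a \<Rightarrow> nat \<Rightarrow> real"
    and L M :: nat and p :: "(nat \<Rightarrow> nat) \<Rightarrow> real"
    and \<alpha> :: "nat \<Rightarrow> real vec" and T :: "nat \<Rightarrow> real mat" and t :: "nat \<Rightarrow> real vec"
    and \<theta> :: "nat \<Rightarrow> real" and v :: "nat \<Rightarrow> real" and E :: "'a set"
  assumes "prob_space P"
    and "L > 0" and "M > 0"
    and dens: "\<And>j. j < L \<Longrightarrow> ME_density (\<alpha> j) (T j) (t j)"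
    and psum: "(\<Sum>i\<in>idx_set L M. p i) = 1"
    and fnonneg: "\<And>x. (\<forall>k<M. 0 \<le> x k) \<Longrightarrow> 0 \<le> mmeam_fun L M p \<alpha> T t x"
    and distr: "distributed P (PiM {..<M} (\<lambda>_. lborel)) X
                  (\<lambda>x. ennreal (mmeam_fun L M p \<alpha> T t x))"
    and theta: "\<And>k. k < M \<Longrightarrow> 0 \<le> \<theta> k \<and> \<theta> k < 1"
    and v_def: "\<And>k. k < M \<Longrightarrow> v k = VaR P (\<lambda>\<omega>. X \<omega> k) (\<theta> k)"
    and E_def: "E = {\<omega> \<in> space P. \<forall>k<M. X \<omega> k > v k}"
    and Epos: "measure P E > 0"
  shows
    "(\<forall>j<M. cond_exp_event P (\<lambda>\<omega>. X \<omega> j) E =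
        v j + (\<Sum>i\<in>idx_set L M. pRL L M p \<alpha> T t v i *
           (alphaRL (\<alpha> (i j)) (T (i j)) (t (i j)) (v j)
              \<bullet> ((minv (- T (i j)) ^\<^sub>m 2) *\<^sub>v t (i j)))))
   \<and> (\<forall>j<M. cond_exp_event P (\<lambda>\<omega>. (X \<omega> j)\<^sup>2) E =
        - (v j)\<^sup>2 + 2 * v j * cond_exp_event P (\<lambda>\<omega>. X \<omega> j) E
        + 2 * (\<Sum>i\<in>idx_set L M. pRL L M p \<alpha> T t v i *
           (alphaRL (\<alpha> (i j)) (T (i j)) (t (i j)) (v j)
              \<bullet> ((minv (- T (i j)) ^\<^sub>m 3) *\<^sub>v t (i j)))))
   \<and> (\<forall>j1<M. \<forall>j2<M. j1 \<noteq> j2 \<longrightarrow>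
        cond_exp_event P (\<lambda>\<omega>. X \<omega> j1 * X \<omega> j2) E =
          - (v j1 * v j2) + v j1 * cond_exp_event P (\<lambda>\<omega>. X \<omega> j2) E
          + v j2 * cond_exp_event P (\<lambda>\<omega>. X \<omega> j1) E
          + (\<Sum>i\<in>idx_set L M. pRL L M p \<alpha> T t v i *
              ((alphaRL (\<alpha> (i j1)) (T (i j1)) (t (i j1)) (v j1)
                  \<bullet> ((minv (- T (i j1)) ^\<^sub>m 2) *\<^sub>v t (i j1))) *
               (alphaRL (\<alpha> (i j2)) (T (i j2)) (t (i j2)) (v j2)
                  \<bullet> ((minv (- T (i j2)) ^\<^sub>m 2) *\<^sub>v t (i j2))))))"
proof -
  have v: "0 \<le> v k" if "k < M" for k
  proof -
    have "(\<lambda>\<omega>. X \<omega> k) \<in> borel_measurable P"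
      using measurable_compose[OF distributed_measurable[OF distr] measurable_component_singleton[of k]] that by simp
    then show ?thesis
      using VaR_nonneg[OF assms(1)] theta[OF that] v_def[OF that] by simp
  qed
  have "(\<Sum>i\<in>idx_set L M. pRL L M p \<alpha> T t v i) = 1"
    using sum_pRL measure_tail_event[OF dens fnonneg distr v E_def] Epos by simp
  then show ?thesis
    by (auto simp: mmeam_cond_moments[OF dens fnonneg distr v E_def] sum_prob_weights)
qed

end
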